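(* Let $L$ be a real-valued Lévy process which is a special semimartingale with characteristic triplet $(b,0,F)$ with respect to the truncation function $h(x)=x$, where $F(dx)=f(x)dx$. Suppose $f_s(x)=\frac{C}{|x|^{1+Y}}+g(x)$ with a constant $C>0$ and $g(x)=O\big(|x|^{-(1+Y-\delta)}\big)$ as $x\to0$ for some $\delta>0$. Then $L$ has Sobolev index $Y$ in each of the following cases: (a) $0<Y<1$, $f_{as}(x)=O(|x|^{-\alpha})$ as $x\to0$ for some $\alpha\le1+Y$, $\int|xf_{as}(x)|dx<\infty$, and $b=\int xF(dx)$; (b) $Y=1$ and $f_{as}(x)=O(|x|^{-\alpha})$ as $x\to0$ for some $\alpha<2$; (c) $1<Y<2$.
   Context: $f_s(x)=\frac12(f(x)+f(-x))$, $f_{as}(x)=\frac12(f(x)-f(-x))$. The symbol of the process is $A(u)=iub-\int\big(e^{-iux}-1+iux\big)F(dx)$, $u\in\mathds R$. The symbol (and the process) has Sobolev index $Y\in(0,2]$ if there are $0\le\beta<Y$ and constants $C_1,C_3\ge0$, $C_2>0$ with $|A(u)|\le C_1(1+u^2)^{Y/2}$ and $\Re(A(u))\ge C_2|u|^Y-C_3(1+u^2)^{\beta/2}$ for all $u\in\mathds R$. $h(x)=O(k(x))$ as $x\to0$ means $|h(x)|/|k(x)|$ is bounded for $x$ in some punctured neighbourhood of $0$. *)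

theory Defs
  imports "HOL-Analysis.Analysis" "HOL-Library.Landau_Symbols"
begin

definition f_sym :: "(real \<Rightarrow> real) \<Rightarrow> real \<Rightarrow> real" where
  "f_sym f x = (f x + f (- x)) / 2"

definition f_asym :: "(real \<Rightarrow> real) \<Rightarrow> real \<Rightarrow> real" where
  "f_asym f x = (f x - f (- x)) / 2"

text \<open>Symbol of the Levy process with triplet (b,0,F), F(dx) = f(x) dx, truncation h(x)=x:
  A(u) = i u b - int (exp(-iux) - 1 + iux) F(dx).\<close>
definition levy_symbol :: "real \<Rightarrow> (real \<Rightarrow> real) \<Rightarrow> real \<Rightarrow> complex" where
  "levy_symbol b f u =
     \<i> * complex_of_real (u * b)
     - (\<integral>x. (exp (- (\<i> * complex_of_real (u * x))) - 1 + \<i> * complex_of_real (u * x))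
              * complex_of_real (f x) \<partial>lborel)"

definition has_sobolev_index :: "(real \<Rightarrow> complex) \<Rightarrow> real \<Rightarrow> bool" where
  "has_sobolev_index A Y \<longleftrightarrow> 0 < Y \<and> Y \<le> 2 \<and>
     (\<exists>\<beta> C1 C2 C3. 0 \<le> \<beta> \<and> \<beta> < Y \<and> C1 \<ge> 0 \<and> C2 > 0 \<and> C3 \<ge> 0 \<and>
        (\<forall>u::real. cmod (A u) \<le> C1 * (1 + u\<^sup>2) powr (Y / 2) \<and>
                   Re (A u) \<ge> C2 * \<bar>u\<bar> powr Y - C3 * (1 + u\<^sup>2) powr (\<beta> / 2)))"

end

theory Submission
  imports Defs
begin

text \<open>
  Write A(u) = \<integral>(1 - cos ux) f(x) dx + i (ub - \<integral>(ux - sin ux) f(x) dx). Only f_sym enters the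
  real part and only f_asym the imaginary part. Near 0 the symmetric part is comparable to
  C |x|^(-1-Y), and the substitution t = ux turns \<integral>k(ux) |x|^(-1-Y) dx into
  |u|^Y \<integral>k(t) |t|^(-1-Y) dt; away from 0 everything is controlled by the moment
  \<integral>min(x^2,|x|) f(x) dx. This gives Re A(u) \<le> const (1+u^2)^(Y/2), and integrating only
  over 1/(2|u|) \<le> x \<le> 1/|u| gives Re A(u) \<ge> const |u|^Y, so \<beta> = 0 works.
  For the imaginary part: if 1 < Y the kernel |t - sin t| |t|^(-1-Y) is integrable; if Y = 1
  the growth bound on f_asym makes \<integral>(ux - sin ux) f_asym(x) dx = O(|u|); if Y < 1 the drift
  b = \<integral>x f(x) dx reduces Im A(u) to \<integral>sin(ux) f_asym(x) dx, and |sin t| |t|^(-1-Y) is integrable.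
\<close>

lemma integrable_indicator_abs_powr_near_0:
  fixes p c :: real
  assumes "-1 < p" "0 < c"
  shows "integrable lborel (\<lambda>x. indicator {-c..c} x * \<bar>x\<bar> powr p :: real)"
proof -
  have "(\<lambda>t. t powr p) integrable_on {0..c}"
    by (rule integrable_on_powr_from_0) (use assms in auto)
  then have "(\<lambda>t. t powr p) absolutely_integrable_on {0..c}"
    by (subst absolutely_integrable_on_iff_nonneg) auto
  then have pos: "integrable lborel (\<lambda>x. indicator {0..c} x * x powr p :: real)"
    unfolding set_integrable_def by (subst (asm) integrable_completion) auto
  have neg: "integrable lborel (\<lambda>x. indicator {0..c} (-x) * (-x) powr p :: real)"
    using lborel_integrable_real_affine[OF pos, of "-1" 0] by simp
  show ?thesis
  proof (rule Bochner_Integration.integrable_bound[OF Bochner_Integration.integrable_add[OF pos neg]])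
    show "AE x in lborel. norm (indicator {-c..c} x * \<bar>x\<bar> powr p :: real) \<le>
      norm (indicator {0..c} x * x powr p + indicator {0..c} (-x) * (-x) powr p :: real)"
      by (intro AE_I2) (auto simp: indicator_def)
  qed measurable
qed

lemma integrable_indicator_abs_powr_at_infinity:
  fixes q c :: real
  assumes "q < -1" "0 < c"
  shows "integrable lborel (\<lambda>x. indicator {x. c \<le> \<bar>x\<bar>} x * \<bar>x\<bar> powr q :: real)"
proof -
  have "(\<lambda>t. t powr q) integrable_on {c..}"
    using has_integral_powr_to_inf[OF assms] by blast
  then have "(\<lambda>t. t powr q) absolutely_integrable_on {c..}"
    by (subst absolutely_integrable_on_iff_nonneg) auto
  then have pos: "integrable lborel (\<lambda>x. indicator {c..} x * x powr q :: real)"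
    unfolding set_integrable_def by (subst (asm) integrable_completion) auto
  have neg: "integrable lborel (\<lambda>x. indicator {c..} (-x) * (-x) powr q :: real)"
    using lborel_integrable_real_affine[OF pos, of "-1" 0] by simp
  show ?thesis
  proof (rule Bochner_Integration.integrable_bound[OF Bochner_Integration.integrable_add[OF pos neg]])
    show "AE x in lborel. norm (indicator {x. c \<le> \<bar>x\<bar>} x * \<bar>x\<bar> powr q :: real) \<le>
      norm (indicator {c..} x * x powr q + indicator {c..} (-x) * (-x) powr q :: real)"
      using assms by (intro AE_I2) (auto simp: indicator_def)
  qed measurable
qed

lemma lborel_integral_reflect:
  fixes g :: "real \<Rightarrow> real"
  assumes "integrable lborel g"
  shows "integrable lborel (\<lambda>x. g (-x))" "(\<integral>x. g (-x) \<partial>lborel) = (\<integral>x. g x \<partial>lborel)"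
  using lborel_integrable_real_affine[OF assms, of "-1" 0] lborel_integral_real_affine[of "-1" g 0]
  by simp_all

lemma lborel_integral_dilation_abs_powr:
  fixes H :: "real \<Rightarrow> real" and u Y :: real
  assumes "H 0 = 0" and kernel: "integrable lborel (\<lambda>t. H t * \<bar>t\<bar> powr (-1-Y))"
  shows "integrable lborel (\<lambda>x. H (u*x) * \<bar>x\<bar> powr (-1-Y))"
    and "(\<integral>x. H (u*x) * \<bar>x\<bar> powr (-1-Y) \<partial>lborel)
           = \<bar>u\<bar> powr Y * (\<integral>t. H t * \<bar>t\<bar> powr (-1-Y) \<partial>lborel)"
proof -
  let ?F = "\<lambda>x. H (u*x) * \<bar>x\<bar> powr (-1-Y)"
  let ?K = "\<integral>t. H t * \<bar>t\<bar> powr (-1-Y) \<partial>lborel"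
  have "integrable lborel ?F \<and> (\<integral>x. ?F x \<partial>lborel) = \<bar>u\<bar> powr Y * ?K"
  proof (cases "u = 0")
    case True
    then show ?thesis using \<open>H 0 = 0\<close> by simp
  next
    case False
    have substituted: "?F (0 + (1/u) * t) = \<bar>u\<bar> powr (1+Y) * (H t * \<bar>t\<bar> powr (-1-Y))" for t
    proof -
      have "\<bar>t/u\<bar> powr (-1-Y) = \<bar>t\<bar> powr (-1-Y) / \<bar>u\<bar> powr (-1-Y)"
        by (simp only: abs_divide powr_divide)
      also have "\<dots> = \<bar>t\<bar> powr (-1-Y) * \<bar>u\<bar> powr (1+Y)"
        using powr_minus[of "\<bar>u\<bar>" "1+Y"] by (simp add: divide_inverse)
      finally show ?thesis using False by (simp add: mult_ac)
    qed
    have integrable: "integrable lborel ?F"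
      using lborel_integrable_real_affine_iff[of "1/u" ?F 0] False kernel
      unfolding substituted by simp
    have "(\<integral>x. ?F x \<partial>lborel) = \<bar>1/u\<bar> * (\<integral>t. ?F (0 + (1/u) * t) \<partial>lborel)"
      using lborel_integral_real_affine[of "1/u" ?F 0] False by simp
    also have "\<dots> = \<bar>1/u\<bar> * \<bar>u\<bar> powr (1+Y) * ?K"
      unfolding substituted by simp
    also have "\<bar>1/u\<bar> * \<bar>u\<bar> powr (1+Y) = \<bar>u\<bar> powr Y"
      using False by (simp add: powr_add abs_divide)
    finally show ?thesis using integrable by simp
  qed
  then show "integrable lborel ?F" "(\<integral>x. ?F x \<partial>lborel) = \<bar>u\<bar> powr Y * ?K"
    by simp_all
qed

lemma integrable_kernel_abs_powr:
  fixes H :: "real \<Rightarrow> real" and Y p q a b :: real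
  assumes "H \<in> borel_measurable borel" "Y < p" "q < Y" "0 \<le> a" "0 \<le> b"
    and near: "\<And>t. \<bar>t\<bar> \<le> 1 \<Longrightarrow> \<bar>H t\<bar> \<le> a * \<bar>t\<bar> powr p"
    and far: "\<And>t. 1 \<le> \<bar>t\<bar> \<Longrightarrow> \<bar>H t\<bar> \<le> b * \<bar>t\<bar> powr q"
  shows "integrable lborel (\<lambda>t. H t * \<bar>t\<bar> powr (-1-Y))"
proof (rule Bochner_Integration.integrable_bound)
  let ?G = "\<lambda>t. a * (indicator {-1..1} t * \<bar>t\<bar> powr (p-1-Y))
      + b * (indicator {x. 1 \<le> \<bar>x\<bar>} t * \<bar>t\<bar> powr (q-1-Y))"
  show "integrable lborel ?G"
    using integrable_indicator_abs_powr_near_0[of "p-1-Y" 1]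
      integrable_indicator_abs_powr_at_infinity[of "q-1-Y" 1] assms(2,3) by auto
  show "(\<lambda>t. H t * \<bar>t\<bar> powr (-1-Y)) \<in> borel_measurable lborel"
    using assms(1) by measurable
  show "AE t in lborel. norm (H t * \<bar>t\<bar> powr (-1-Y)) \<le> norm (?G t)"
  proof (intro AE_I2)
    fix t :: real
    have shift: "\<bar>t\<bar> powr (r-1-Y) = \<bar>t\<bar> powr r * \<bar>t\<bar> powr (-1-Y)" for r
      by (metis powr_add diff_conv_add_uminus add.assoc)
    have G_nonneg: "0 \<le> ?G t"
      using \<open>0 \<le> a\<close> \<open>0 \<le> b\<close> by (simp add: indicator_def)
    have "\<bar>H t\<bar> * \<bar>t\<bar> powr (-1-Y) \<le> ?G t"
    proof (cases "\<bar>t\<bar> \<le> 1")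
      case True
      then have "\<bar>H t\<bar> * \<bar>t\<bar> powr (-1-Y) \<le> a * \<bar>t\<bar> powr p * \<bar>t\<bar> powr (-1-Y)"
        by (intro mult_right_mono near) auto
      also have "\<dots> = a * (indicator {-1..1} t * \<bar>t\<bar> powr (p-1-Y))"
        using True by (simp add: shift indicator_def abs_le_iff)
      also have "\<dots> \<le> ?G t"
        using \<open>0 \<le> b\<close> by (simp add: indicator_def)
      finally show ?thesis .
    next
      case False
      then have "\<bar>H t\<bar> * \<bar>t\<bar> powr (-1-Y) \<le> b * \<bar>t\<bar> powr q * \<bar>t\<bar> powr (-1-Y)"
        by (intro mult_right_mono far) auto
      also have "\<dots> = b * (indicator {x. 1 \<le> \<bar>x\<bar>} t * \<bar>t\<bar> powr (q-1-Y))"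
        using False by (simp add: shift indicator_def)
      also have "\<dots> \<le> ?G t"
        using \<open>0 \<le> a\<close> by (simp add: indicator_def)
      finally show ?thesis .
    qed
    then show "norm (H t * \<bar>t\<bar> powr (-1-Y)) \<le> norm (?G t)"
      using G_nonneg by (simp add: abs_mult)
  qed
qed

lemma abs_times_abs_powr:
  fixes x a :: real
  shows "\<bar>x\<bar> * \<bar>x\<bar> powr a = \<bar>x\<bar> powr (a + 1)"
  using powr_add[of "\<bar>x\<bar>" a 1] by simp

lemma integral_bound_near_far:
  fixes h N G :: "real \<Rightarrow> real"
  assumes "h \<in> borel_measurable borel" "integrable lborel N" "integrable lborel G"
    and "\<And>x. 0 \<le> N x" "\<And>x. 0 \<le> G x"
    and near: "\<And>x. x \<noteq> 0 \<Longrightarrow> \<bar>x\<bar> < e \<Longrightarrow> \<bar>h x\<bar> \<le> N x"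
    and far: "\<And>x. e \<le> \<bar>x\<bar> \<Longrightarrow> \<bar>h x\<bar> \<le> G x"
  shows "integrable lborel h" "\<bar>\<integral>x. h x \<partial>lborel\<bar> \<le> (\<integral>x. N x \<partial>lborel) + (\<integral>x. G x \<partial>lborel)"
proof -
  have bound: "AE x in lborel. \<bar>h x\<bar> \<le> N x + G x"
    using AE_lborel_singleton[of 0]
  proof eventually_elim
    case (elim x)
    show ?case
      using near[OF elim] far[of x] assms(4,5)[of x] by (cases "\<bar>x\<bar> < e") auto
  qed
  have NG: "integrable lborel (\<lambda>x. N x + G x)"
    using assms(2,3) by simp
  show h: "integrable lborel h"
    by (rule Bochner_Integration.integrable_bound[OF NG]) (use assms(1) bound assms(4,5) in auto)
  have "\<bar>\<integral>x. h x \<partial>lborel\<bar> \<le> (\<integral>x. \<bar>h x\<bar> \<partial>lborel)"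
    using Bochner_Integration.integral_norm_bound[of lborel h] by simp
  also have "\<dots> \<le> (\<integral>x. N x + G x \<partial>lborel)"
    by (rule integral_mono_AE[OF integrable_abs[OF h] NG bound])
  also have "\<dots> = (\<integral>x. N x \<partial>lborel) + (\<integral>x. G x \<partial>lborel)"
    using assms(2,3) by simp
  finally show "\<bar>\<integral>x. h x \<partial>lborel\<bar> \<le> (\<integral>x. N x \<partial>lborel) + (\<integral>x. G x \<partial>lborel)" .
qed

lemma integral_kernel_bound:
  fixes k \<phi> G :: "real \<Rightarrow> real" and u Y D e :: real
  assumes "k \<in> borel_measurable borel" "\<phi> \<in> borel_measurable borel" "k 0 = 0"
    and kernel: "integrable lborel (\<lambda>t. \<bar>k t\<bar> * \<bar>t\<bar> powr (-1-Y))"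
    and "0 \<le> D" and near: "\<And>x. x \<noteq> 0 \<Longrightarrow> \<bar>x\<bar> < e \<Longrightarrow> \<bar>\<phi> x\<bar> \<le> D * \<bar>x\<bar> powr (-1-Y)"
    and "integrable lborel G" "\<And>x. 0 \<le> G x"
    and far: "\<And>x. e \<le> \<bar>x\<bar> \<Longrightarrow> \<bar>k (u*x) * \<phi> x\<bar> \<le> G x"
  shows "\<bar>\<integral>x. k (u*x) * \<phi> x \<partial>lborel\<bar>
           \<le> D * \<bar>u\<bar> powr Y * (\<integral>t. \<bar>k t\<bar> * \<bar>t\<bar> powr (-1-Y) \<partial>lborel) + (\<integral>x. G x \<partial>lborel)"
proof -
  let ?N = "\<lambda>x. D * (\<bar>k (u*x)\<bar> * \<bar>x\<bar> powr (-1-Y))"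
  note dilation = lborel_integral_dilation_abs_powr[where H = "\<lambda>t. \<bar>k t\<bar>", OF _ kernel]
  have "\<bar>\<integral>x. k (u*x) * \<phi> x \<partial>lborel\<bar> \<le> (\<integral>x. ?N x \<partial>lborel) + (\<integral>x. G x \<partial>lborel)"
  proof (rule integral_bound_near_far)
    show "integrable lborel ?N"
      using dilation \<open>k 0 = 0\<close> by simp
    show "\<bar>k (u*x) * \<phi> x\<bar> \<le> ?N x" if "x \<noteq> 0" "\<bar>x\<bar> < e" for x
      using mult_left_mono[OF near[OF that], of "\<bar>k (u*x)\<bar>"] by (simp add: abs_mult mult_ac)
  qed (use assms in auto)
  also have "(\<integral>x. ?N x \<partial>lborel) = D * \<bar>u\<bar> powr Y * (\<integral>t. \<bar>k t\<bar> * \<bar>t\<bar> powr (-1-Y) \<partial>lborel)"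
    using dilation \<open>k 0 = 0\<close> by simp
  finally show ?thesis .
qed

section \<open>The kernels 1 - cos t, t - sin t and sin t\<close>

lemma sq_le_abs_of_abs_le_1:
  fixes t :: real
  assumes "\<bar>t\<bar> \<le> 1"
  shows "t\<^sup>2 \<le> \<bar>t\<bar>"
  using mult_left_mono[OF assms, of "\<bar>t\<bar>"] by (simp add: power2_eq_square)

lemma abs_le_sq_of_1_le_abs:
  fixes t :: real
  assumes "1 \<le> \<bar>t\<bar>"
  shows "\<bar>t\<bar> \<le> t\<^sup>2"
  using mult_left_mono[OF assms, of "\<bar>t\<bar>"] by (simp add: power2_eq_square)

lemma one_minus_cos_le_half_sq:
  fixes t :: real
  shows "1 - cos t \<le> t\<^sup>2 / 2"
proof -
  have "cos t = 1 - 2 * sin (t/2) ^ 2"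
    using cos_double_sin[of "t/2"] by simp
  moreover have "sin (t/2) ^ 2 \<le> (t/2) ^ 2"
    using abs_sin_x_le_abs_x[of "t/2"] by (metis abs_ge_zero power2_abs power_mono)
  ultimately show ?thesis by (simp add: power_divide)
qed

lemma one_minus_cos_le_abs:
  fixes t :: real
  shows "1 - cos t \<le> 2 * \<bar>t\<bar>"
proof (cases "\<bar>t\<bar> \<le> 1")
  case True
  then show ?thesis
    using one_minus_cos_le_half_sq[of t] sq_le_abs_of_abs_le_1[of t] by simp
next
  case False
  then show ?thesis using cos_ge_minus_one[of t] by linarith
qed

lemma abs_sub_sin_le_cube:
  fixes t :: real
  shows "\<bar>t - sin t\<bar> \<le> \<bar>t\<bar> ^ 3 / 6"
proof -
  have "\<bar>sin t - (\<Sum>m<3. sin_coeff m * t ^ m)\<bar> \<le> inverse (fact 3) * \<bar>t\<bar> ^ 3"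
    by (rule Maclaurin_sin_bound)
  then show ?thesis
    by (simp add: numeral_3_eq_3 sin_coeff_def fact_numeral abs_minus_commute)
qed

lemma abs_sub_sin_le_abs:
  fixes t :: real
  shows "\<bar>t - sin t\<bar> \<le> 2 * \<bar>t\<bar>"
  using abs_sin_x_le_abs_x[of t] by linarith

lemma abs_sub_sin_le_sq:
  fixes t :: real
  shows "\<bar>t - sin t\<bar> \<le> 2 * t\<^sup>2"
proof (cases "\<bar>t\<bar> \<le> 1")
  case True
  then have "\<bar>t\<bar> ^ 3 \<le> t\<^sup>2"
    using power_decreasing[of 2 3 "\<bar>t\<bar>"] by simp
  then show ?thesis using abs_sub_sin_le_cube[of t] zero_le_power2[of t] by linarith
next
  case False
  then show ?thesis
    using abs_sub_sin_le_abs[of t] abs_le_sq_of_1_le_abs[of t] by simp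
qed

lemma abs_sub_sin_mult_le_abs_powr:
  fixes u x y K \<alpha> :: real
  assumes "\<bar>y\<bar> \<le> K * \<bar>x\<bar> powr (- \<alpha>)"
  shows "\<bar>(u*x - sin (u*x)) * y\<bar> \<le> 2*\<bar>u\<bar>*K * \<bar>x\<bar> powr (1 - \<alpha>)"
proof -
  have "\<bar>(u*x - sin (u*x)) * y\<bar> = \<bar>u*x - sin (u*x)\<bar> * \<bar>y\<bar>"
    by (rule abs_mult)
  also have "\<dots> \<le> (2 * \<bar>u*x\<bar>) * (K * \<bar>x\<bar> powr (- \<alpha>))"
    by (rule mult_mono[OF abs_sub_sin_le_abs assms]) simp_all
  also have "\<dots> = 2*\<bar>u\<bar>*K * \<bar>x\<bar> powr (1 - \<alpha>)"
    by (simp add: abs_mult abs_times_abs_powr)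
  finally show ?thesis .
qed

lemma dilation_le_min_sq_abs:
  fixes k :: "real \<Rightarrow> real"
  assumes sq: "\<And>t. \<bar>k t\<bar> \<le> a * t\<^sup>2" and lin: "\<And>t. \<bar>k t\<bar> \<le> b * \<bar>t\<bar>"
  shows "\<bar>k (u*x)\<bar> \<le> (a * u\<^sup>2 + b * \<bar>u\<bar>) * min (x\<^sup>2) \<bar>x\<bar>"
proof -
  have "0 \<le> a" "0 \<le> b"
    using sq[of 1] lin[of 1] abs_ge_zero[of "k 1"] by simp_all
  show ?thesis
  proof (cases "\<bar>x\<bar> \<le> 1")
    case True
    then have "min (x\<^sup>2) \<bar>x\<bar> = x\<^sup>2"
      using sq_le_abs_of_abs_le_1 by simp
    moreover have "\<bar>k (u*x)\<bar> \<le> a * u\<^sup>2 * x\<^sup>2"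
      using sq[of "u*x"] by (simp add: power_mult_distrib mult_ac)
    ultimately show ?thesis
      using \<open>0 \<le> b\<close> by (simp add: distrib_right add_increasing2)
  next
    case False
    then have "min (x\<^sup>2) \<bar>x\<bar> = \<bar>x\<bar>"
      using abs_le_sq_of_1_le_abs[of x] by simp
    moreover have "\<bar>k (u*x)\<bar> \<le> b * \<bar>u\<bar> * \<bar>x\<bar>"
      using lin[of "u*x"] by (simp add: abs_mult mult_ac)
    ultimately show ?thesis
      using \<open>0 \<le> a\<close> by (simp add: distrib_right add_increasing)
  qed
qed

lemma integrable_abs_one_minus_cos_abs_powr:
  fixes Y :: real
  assumes "0 < Y" "Y < 2"
  shows "integrable lborel (\<lambda>t. \<bar>1 - cos t\<bar> * \<bar>t\<bar> powr (-1-Y))"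
proof (rule integrable_kernel_abs_powr[where H="\<lambda>t::real. \<bar>1 - cos t\<bar>" and Y=Y and p=2 and q=0 and a="1/2" and b=2])
  show "\<bar>\<bar>1 - cos t\<bar>\<bar> \<le> 1/2 * \<bar>t\<bar> powr 2" for t :: real
    using one_minus_cos_le_half_sq[of t] cos_le_one[of t] by (simp add: powr_numeral)
  show "\<bar>\<bar>1 - cos t\<bar>\<bar> \<le> 2 * \<bar>t\<bar> powr 0" if "1 \<le> \<bar>t\<bar>" for t :: real
    using that cos_ge_minus_one[of t] cos_le_one[of t] by auto
qed (use assms in auto)

lemma integrable_abs_sub_sin_abs_powr:
  fixes Y :: real
  assumes "1 < Y" "Y < 2"
  shows "integrable lborel (\<lambda>t. \<bar>t - sin t\<bar> * \<bar>t\<bar> powr (-1-Y))"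
proof (rule integrable_kernel_abs_powr[where H="\<lambda>t::real. \<bar>t - sin t\<bar>" and Y=Y and p=2 and q=1 and a=2 and b=2])
  show "\<bar>\<bar>t - sin t\<bar>\<bar> \<le> 2 * \<bar>t\<bar> powr 2" for t :: real
    using abs_sub_sin_le_sq[of t] by (simp add: powr_numeral)
  show "\<bar>\<bar>t - sin t\<bar>\<bar> \<le> 2 * \<bar>t\<bar> powr 1" for t :: real
    using abs_sub_sin_le_abs[of t] by simp
qed (use assms in auto)

lemma integrable_abs_sin_abs_powr:
  fixes Y :: real
  assumes "0 < Y" "Y < 1"
  shows "integrable lborel (\<lambda>t. \<bar>sin t\<bar> * \<bar>t\<bar> powr (-1-Y))"
proof (rule integrable_kernel_abs_powr[where H="\<lambda>t::real. \<bar>sin t\<bar>" and Y=Y and p=1 and q=0 and a=1 and b=1])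
  show "\<bar>\<bar>sin t\<bar>\<bar> \<le> 1 * \<bar>t\<bar> powr 1" for t :: real
    using abs_sin_x_le_abs_x[of t] by simp
  show "\<bar>\<bar>sin t\<bar>\<bar> \<le> 1 * \<bar>t\<bar> powr 0" if "1 \<le> \<bar>t\<bar>" for t :: real
    using that by auto
qed (use assms in auto)

lemma integral_even_mult_f_sym:
  fixes f h :: "real \<Rightarrow> real"
  assumes "integrable lborel (\<lambda>x. h x * f x)" and even: "\<And>x. h (-x) = h x"
  shows "integrable lborel (\<lambda>x. h x * f_sym f x)"
    and "(\<integral>x. h x * f_sym f x \<partial>lborel) = (\<integral>x. h x * f x \<partial>lborel)"
proof -
  note reflected = lborel_integral_reflect[OF assms(1), unfolded even]
  have "(\<lambda>x. h x * f_sym f x) = (\<lambda>x. (h x * f x + h x * f (-x)) / 2)"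
    by (simp add: f_sym_def algebra_simps)
  then show "integrable lborel (\<lambda>x. h x * f_sym f x)"
    and "(\<integral>x. h x * f_sym f x \<partial>lborel) = (\<integral>x. h x * f x \<partial>lborel)"
    using assms(1) reflected by simp_all
qed

lemma integral_odd_mult_f_asym:
  fixes f h :: "real \<Rightarrow> real"
  assumes "integrable lborel (\<lambda>x. h x * f x)" and odd: "\<And>x. h (-x) = - h x"
  shows "integrable lborel (\<lambda>x. h x * f_asym f x)"
    and "(\<integral>x. h x * f_asym f x \<partial>lborel) = (\<integral>x. h x * f x \<partial>lborel)"
proof -
  note reflected = lborel_integral_reflect[OF assms(1), unfolded odd]
  have "integrable lborel (\<lambda>x. h x * f (-x))"
    using integrable_minus[OF reflected(1)] by simp
  moreover have "(\<integral>x. h x * f (-x) \<partial>lborel) = - (\<integral>x. h x * f x \<partial>lborel)"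
    using reflected(2) by (simp add: integral_minus)
  moreover have "(\<lambda>x. h x * f_asym f x) = (\<lambda>x. (h x * f x - h x * f (-x)) / 2)"
    by (simp add: f_asym_def algebra_simps)
  ultimately show "integrable lborel (\<lambda>x. h x * f_asym f x)"
    and "(\<integral>x. h x * f_asym f x \<partial>lborel) = (\<integral>x. h x * f x \<partial>lborel)"
    using assms(1) by (simp_all add: Bochner_Integration.integral_diff)
qed

lemma bigo_at_0_abs_powrE:
  fixes h :: "real \<Rightarrow> real"
  assumes "h \<in> O[at 0](\<lambda>x. \<bar>x\<bar> powr r)"
  obtains K d where "0 < K" "0 < d" "\<And>x. x \<noteq> 0 \<Longrightarrow> \<bar>x\<bar> < d \<Longrightarrow> \<bar>h x\<bar> \<le> K * \<bar>x\<bar> powr r"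
proof -
  obtain K where "0 < K" and "eventually (\<lambda>x. norm (h x) \<le> K * norm (\<bar>x\<bar> powr r)) (at 0)"
    using assms by (auto elim: landau_o.bigE)
  then show ?thesis
    using that[of K] unfolding eventually_at by auto
qed

lemma comparable_near_0:
  fixes \<phi> :: "real \<Rightarrow> real" and C Y \<delta> :: real
  assumes "(\<lambda>x. \<phi> x - C / \<bar>x\<bar> powr (1 + Y)) \<in> O[at 0](\<lambda>x. \<bar>x\<bar> powr (- (1 + Y - \<delta>)))"
    and "0 < C" "0 < \<delta>"
  obtains \<epsilon> where "0 < \<epsilon>" "\<epsilon> \<le> 1"
    "\<And>x. x \<noteq> 0 \<Longrightarrow> \<bar>x\<bar> < \<epsilon> \<Longrightarrow>
       C/2 * \<bar>x\<bar> powr (-1-Y) \<le> \<phi> x \<and> \<phi> x \<le> 3*C/2 * \<bar>x\<bar> powr (-1-Y)"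
proof -
  obtain K d where "0 < K" "0 < d" and close:
    "\<And>x. x \<noteq> 0 \<Longrightarrow> \<bar>x\<bar> < d \<Longrightarrow> \<bar>\<phi> x - C / \<bar>x\<bar> powr (1 + Y)\<bar> \<le> K * \<bar>x\<bar> powr (- (1 + Y - \<delta>))"
    using bigo_at_0_abs_powrE[OF assms(1)] by blast
  \<comment> \<open>below this radius the error term is at most half the main term\<close>
  define r where "r = (C / (2*K)) powr (1/\<delta>)"
  have r_pos: "0 < r" and r_powr: "r powr \<delta> = C / (2*K)"
    using \<open>0 < C\<close> \<open>0 < K\<close> \<open>0 < \<delta>\<close> by (simp_all add: r_def powr_powr)
  show ?thesis
  proof (rule that[of "min 1 (min d r)"])
    show "0 < min 1 (min d r)" "min 1 (min d r) \<le> 1"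
      using \<open>0 < d\<close> r_pos by auto
    fix x :: real
    assume "x \<noteq> 0" "\<bar>x\<bar> < min 1 (min d r)"
    then have x: "0 < \<bar>x\<bar>" "\<bar>x\<bar> < d" "\<bar>x\<bar> < r" by auto
    define P where "P = \<bar>x\<bar> powr (-1-Y)"
    have "0 < P" using x by (simp add: P_def)
    have main: "C / \<bar>x\<bar> powr (1 + Y) = C * P"
      using powr_minus[of "\<bar>x\<bar>" "1+Y"] by (simp add: P_def divide_inverse)
    have error: "\<bar>x\<bar> powr (- (1 + Y - \<delta>)) = P * \<bar>x\<bar> powr \<delta>"
      unfolding P_def by (metis powr_add add.commute diff_conv_add_uminus minus_diff_eq minus_add_distrib)
    have "\<bar>x\<bar> powr \<delta> < r powr \<delta>"
      using x \<open>0 < \<delta>\<close> by (intro powr_less_mono2) auto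
    then have "K * \<bar>x\<bar> powr \<delta> \<le> C/2"
      using \<open>0 < K\<close> r_powr by (simp add: field_simps)
    then have "K * (P * \<bar>x\<bar> powr \<delta>) \<le> C/2 * P"
      using mult_right_mono[of _ _ P] \<open>0 < P\<close> by (simp add: mult_ac)
    moreover have "\<bar>\<phi> x - C * P\<bar> \<le> K * (P * \<bar>x\<bar> powr \<delta>)"
      using close[OF \<open>x \<noteq> 0\<close> x(2)] main error by simp
    ultimately show "C/2 * \<bar>x\<bar> powr (-1-Y) \<le> \<phi> x \<and> \<phi> x \<le> 3*C/2 * \<bar>x\<bar> powr (-1-Y)"
      unfolding P_def[symmetric] by (auto simp: abs_le_iff)
  qed
qed

lemma le_min_sq_abs_mult_div:
  fixes e x y :: real
  assumes "0 < e" "e \<le> 1" "e \<le> \<bar>x\<bar>" "0 \<le> y"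
  shows "y \<le> min (x\<^sup>2) \<bar>x\<bar> * y / e\<^sup>2" and "\<bar>x\<bar> * y \<le> min (x\<^sup>2) \<bar>x\<bar> * y / e"
proof -
  have "e\<^sup>2 \<le> x\<^sup>2"
    using power_mono[OF assms(3), of 2] assms(1) by simp
  moreover have "e\<^sup>2 \<le> \<bar>x\<bar>"
    using mult_mono[OF assms(2,3)] assms(1) by (simp add: power2_eq_square)
  ultimately have "e\<^sup>2 * y \<le> min (x\<^sup>2) \<bar>x\<bar> * y"
    using assms(4) by (intro mult_right_mono) auto
  then show "y \<le> min (x\<^sup>2) \<bar>x\<bar> * y / e\<^sup>2"
    using assms(1) by (simp add: pos_le_divide_eq mult_ac)
  have "e * \<bar>x\<bar> \<le> x\<^sup>2"
    using mult_right_mono[OF assms(3), of "\<bar>x\<bar>"] by (simp add: power2_eq_square)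
  moreover have "e * \<bar>x\<bar> \<le> \<bar>x\<bar>"
    using mult_right_mono[OF assms(2), of "\<bar>x\<bar>"] by simp
  ultimately have "e * \<bar>x\<bar> * y \<le> min (x\<^sup>2) \<bar>x\<bar> * y"
    using assms(4) by (intro mult_right_mono) auto
  then show "\<bar>x\<bar> * y \<le> min (x\<^sup>2) \<bar>x\<bar> * y / e"
    using assms(1) by (simp add: pos_le_divide_eq mult_ac)
qed

section \<open>A criterion for the Sobolev index\<close>

lemma abs_powr_le_japanese_bracket:
  fixes u s Y :: real
  assumes "0 \<le> s" "s \<le> Y"
  shows "\<bar>u\<bar> powr s \<le> (1 + u\<^sup>2) powr (Y/2)"
proof -
  have "\<bar>u\<bar> powr s = (\<bar>u\<bar> powr 2) powr (s/2)"
    unfolding powr_powr by simp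
  also have "\<dots> = (u\<^sup>2) powr (s/2)"
    by simp
  also have "\<dots> \<le> (1 + u\<^sup>2) powr (s/2)"
    using assms by (intro powr_mono2) auto
  also have "\<dots> \<le> (1 + u\<^sup>2) powr (Y/2)"
    using assms by (intro powr_mono) auto
  finally show ?thesis .
qed

lemma le_mult_japanese_bracket:
  fixes c u Y :: real
  assumes "0 \<le> c" "0 \<le> Y"
  shows "c \<le> c * (1 + u\<^sup>2) powr (Y/2)"
  using mult_left_mono[OF ge_one_powr_ge_zero[of "1 + u\<^sup>2" "Y/2"] assms(1)] assms(2) by simp

lemma has_sobolev_indexI:
  fixes A :: "real \<Rightarrow> complex" and Y K c R :: real
  assumes "0 < Y" "Y \<le> 2" "0 < c"
    and upper: "\<And>u. cmod (A u) \<le> K * (1 + u\<^sup>2) powr (Y/2)"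
    and Re_nonneg: "\<And>u. 0 \<le> Re (A u)"
    and Re_lower: "\<And>u. R < \<bar>u\<bar> \<Longrightarrow> c * \<bar>u\<bar> powr Y \<le> Re (A u)"
  shows "has_sobolev_index A Y"
proof -
  have "0 \<le> K"
    using order_trans[OF norm_ge_zero upper[of 0]] by simp
  define C3 where "C3 = c * max R 0 powr Y"
  have "0 \<le> C3"
    using \<open>0 < c\<close> by (simp add: C3_def)
  have "c * \<bar>u\<bar> powr Y - C3 * (1 + u\<^sup>2) powr (0/2) \<le> Re (A u)" for u
  proof -
    have "(1 + u\<^sup>2) powr (0/2) = 1"
      using zero_le_power2[of u] by (simp add: add_nonneg_eq_0_iff)
    moreover have "c * \<bar>u\<bar> powr Y - C3 \<le> Re (A u)"
    proof (cases "R < \<bar>u\<bar>")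
      case True
      then show ?thesis using Re_lower[OF True] \<open>0 \<le> C3\<close> by simp
    next
      case False
      then have "c * \<bar>u\<bar> powr Y \<le> C3"
        unfolding C3_def using \<open>0 < c\<close> \<open>0 < Y\<close> by (intro mult_left_mono powr_mono2) auto
      then show ?thesis using Re_nonneg[of u] by simp
    qed
    ultimately show ?thesis by simp
  qed
  then show ?thesis
    unfolding has_sobolev_index_def
    using assms(1-3) upper \<open>0 \<le> K\<close> \<open>0 \<le> C3\<close> by (intro conjI exI[of _ 0] exI[of _ K] exI[of _ c] exI[of _ C3]) auto
qed

section \<open>Levy densities and their symbols\<close>

lemma cexp_minus_i_expand:
  fixes t :: real
  shows "exp (- (\<i> * complex_of_real t)) - 1 + \<i> * complex_of_real t
           = complex_of_real (cos t - 1) + \<i> * complex_of_real (t - sin t)"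
proof -
  have "exp (- (\<i> * complex_of_real t)) = cis (-t)"
    by (simp add: cis_conv_exp)
  then show ?thesis by (simp add: complex_eq_iff)
qed

locale levy_density =
  fixes f :: "real \<Rightarrow> real"
  assumes nonneg: "\<And>x. 0 \<le> f x"
    and measurable_density [measurable]: "f \<in> borel_measurable borel"
    and integrable_moment: "integrable lborel (\<lambda>x. min (x\<^sup>2) \<bar>x\<bar> * f x)"
begin

lemma f_sym_nonneg: "0 \<le> f_sym f x"
  using nonneg[of x] nonneg[of "-x"] by (simp add: f_sym_def)

lemma abs_f_asym_le_f_sym: "\<bar>f_asym f x\<bar> \<le> f_sym f x"
  using nonneg[of x] nonneg[of "-x"] by (simp add: f_sym_def f_asym_def)

lemma f_le_twice_f_sym: "f x \<le> 2 * f_sym f x"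
  using nonneg[of "-x"] by (simp add: f_sym_def)

lemma measurable_f_sym [measurable]: "f_sym f \<in> borel_measurable borel"
  unfolding f_sym_def[abs_def] by measurable

lemma measurable_f_asym [measurable]: "f_asym f \<in> borel_measurable borel"
  unfolding f_asym_def[abs_def] by measurable

lemma integrable_moment_f_sym: "integrable lborel (\<lambda>x. min (x\<^sup>2) \<bar>x\<bar> * f_sym f x)"
  by (rule integral_even_mult_f_sym(1)[OF integrable_moment]) simp

lemma integrable_dilation_mult_density:
  fixes k :: "real \<Rightarrow> real"
  assumes "k \<in> borel_measurable borel"
    and "\<And>t. \<bar>k t\<bar> \<le> a * t\<^sup>2" "\<And>t. \<bar>k t\<bar> \<le> b * \<bar>t\<bar>"
  shows "integrable lborel (\<lambda>x. k (u*x) * f x)"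
proof (rule Bochner_Integration.integrable_bound)
  have "0 \<le> a * u\<^sup>2 + b * \<bar>u\<bar>"
    using dilation_le_min_sq_abs[OF assms(2,3), of u 1] abs_ge_zero[of "k u"] by simp
  then show "AE x in lborel. norm (k (u*x) * f x) \<le> norm ((a * u\<^sup>2 + b * \<bar>u\<bar>) * (min (x\<^sup>2) \<bar>x\<bar> * f x))"
  proof (intro AE_I2)
    fix x
    have "\<bar>k (u*x)\<bar> * f x \<le> (a * u\<^sup>2 + b * \<bar>u\<bar>) * min (x\<^sup>2) \<bar>x\<bar> * f x"
      by (rule mult_right_mono[OF dilation_le_min_sq_abs[OF assms(2,3)] nonneg])
    then show "norm (k (u*x) * f x) \<le> norm ((a * u\<^sup>2 + b * \<bar>u\<bar>) * (min (x\<^sup>2) \<bar>x\<bar> * f x))"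
      using \<open>0 \<le> a * u\<^sup>2 + b * \<bar>u\<bar>\<close> nonneg[of x] by (simp add: abs_mult mult_ac)
  qed
  show "integrable lborel (\<lambda>x. (a * u\<^sup>2 + b * \<bar>u\<bar>) * (min (x\<^sup>2) \<bar>x\<bar> * f x))"
    using integrable_moment by simp
  show "(\<lambda>x. k (u*x) * f x) \<in> borel_measurable lborel"
    using assms(1) by measurable
qed

lemma integrable_one_minus_cos_density: "integrable lborel (\<lambda>x. (1 - cos (u*x)) * f x)"
  using one_minus_cos_le_half_sq one_minus_cos_le_abs cos_le_one
  by (intro integrable_dilation_mult_density[where k="\<lambda>t. 1 - cos t" and a="1/2" and b=2]) auto

lemma integrable_sub_sin_density: "integrable lborel (\<lambda>x. (u*x - sin (u*x)) * f x)"
  using abs_sub_sin_le_sq abs_sub_sin_le_abs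
  by (intro integrable_dilation_mult_density[where k="\<lambda>t. t - sin t" and a=2 and b=2]) auto

lemma levy_symbol_Re_Im:
  shows "Re (levy_symbol b f u) = (\<integral>x. (1 - cos (u*x)) * f x \<partial>lborel)"
    and "Im (levy_symbol b f u) = u * b - (\<integral>x. (u*x - sin (u*x)) * f x \<partial>lborel)"
proof -
  let ?R = "\<lambda>x. (cos (u*x) - 1) * f x" and ?I = "\<lambda>x. (u*x - sin (u*x)) * f x"
  have R: "integrable lborel ?R"
    using integrable_minus[OF integrable_one_minus_cos_density[of u]] by (simp add: algebra_simps)
  have I: "integrable lborel ?I"
    by (rule integrable_sub_sin_density)
  have integrand: "(\<lambda>x. (exp (- (\<i> * complex_of_real (u * x))) - 1 + \<i> * complex_of_real (u * x))
      * complex_of_real (f x)) = (\<lambda>x. complex_of_real (?R x) + \<i> * complex_of_real (?I x))"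
    by (rule ext, subst cexp_minus_i_expand) (simp add: algebra_simps)
  have R': "complex_integrable lborel (\<lambda>x. complex_of_real (?R x))"
    by (rule integrable_of_real[OF R])
  have I': "complex_integrable lborel (\<lambda>x. \<i> * complex_of_real (?I x))"
    by (rule Bochner_Integration.integrable_mult_right[OF integrable_of_real[OF I]])
  have "(\<integral>x. complex_of_real (?R x) + \<i> * complex_of_real (?I x) \<partial>lborel)
      = complex_of_real (\<integral>x. ?R x \<partial>lborel) + \<i> * complex_of_real (\<integral>x. ?I x \<partial>lborel)"
    by (simp only: Bochner_Integration.integral_add[OF R' I'] integral_mult_right_zero
        integral_complex_of_real)
  moreover have "(\<integral>x. ?R x \<partial>lborel) = - (\<integral>x. (1 - cos (u*x)) * f x \<partial>lborel)"
    by (subst integral_minus[symmetric]) (simp add: algebra_simps)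
  ultimately show "Re (levy_symbol b f u) = (\<integral>x. (1 - cos (u*x)) * f x \<partial>lborel)"
    and "Im (levy_symbol b f u) = u * b - (\<integral>x. ?I x \<partial>lborel)"
    unfolding levy_symbol_def integrand by simp_all
qed

lemma integrable_one_minus_cos_f_sym: "integrable lborel (\<lambda>x. (1 - cos (u*x)) * f_sym f x)"
  by (rule integral_even_mult_f_sym(1)[OF integrable_one_minus_cos_density]) simp

lemma Re_levy_symbol_f_sym:
  "Re (levy_symbol b f u) = (\<integral>x. (1 - cos (u*x)) * f_sym f x \<partial>lborel)"
  using integral_even_mult_f_sym(2)[OF integrable_one_minus_cos_density[of u]]
  by (simp add: levy_symbol_Re_Im)

lemma Im_levy_symbol_f_asym:
  "Im (levy_symbol b f u) = u * b - (\<integral>x. (u*x - sin (u*x)) * f_asym f x \<partial>lborel)"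
  using integral_odd_mult_f_asym(2)[OF integrable_sub_sin_density[of u]]
  by (simp add: levy_symbol_Re_Im)

lemma abs_sub_sin_mult_f_asym_le:
  assumes "0 < e" "e \<le> 1" "e \<le> \<bar>x\<bar>"
  shows "\<bar>(u*x - sin (u*x)) * f_asym f x\<bar> \<le> 2*\<bar>u\<bar>/e * (min (x\<^sup>2) \<bar>x\<bar> * f_sym f x)"
proof -
  have "\<bar>(u*x - sin (u*x)) * f_asym f x\<bar> = \<bar>u*x - sin (u*x)\<bar> * \<bar>f_asym f x\<bar>"
    by (rule abs_mult)
  also have "\<dots> \<le> (2 * \<bar>u*x\<bar>) * f_sym f x"
    by (rule mult_mono[OF abs_sub_sin_le_abs abs_f_asym_le_f_sym]) simp_all
  also have "\<dots> = 2*\<bar>u\<bar> * (\<bar>x\<bar> * f_sym f x)"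
    by (simp add: abs_mult)
  also have "\<dots> \<le> 2*\<bar>u\<bar> * (min (x\<^sup>2) \<bar>x\<bar> * f_sym f x / e)"
    using le_min_sq_abs_mult_div(2)[OF assms f_sym_nonneg[of x]] by (rule mult_left_mono) simp
  finally show ?thesis by simp
qed

lemma Re_levy_symbol_nonneg: "0 \<le> Re (levy_symbol b f u)"
  unfolding levy_symbol_Re_Im using nonneg cos_le_one by simp

end

locale stable_like_levy_density = levy_density +
  fixes C Y \<epsilon> :: real
  assumes C_pos: "0 < C" and Y_pos: "0 < Y" and Y_less_2: "Y < 2"
    and eps_pos: "0 < \<epsilon>" and eps_le_1: "\<epsilon> \<le> 1"
    and comparable: "\<And>x. x \<noteq> 0 \<Longrightarrow> \<bar>x\<bar> < \<epsilon> \<Longrightarrow>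
      C/2 * \<bar>x\<bar> powr (-1-Y) \<le> f_sym f x \<and> f_sym f x \<le> 3*C/2 * \<bar>x\<bar> powr (-1-Y)"
begin

lemma abs_f_asym_le_near_0:
  assumes "x \<noteq> 0" "\<bar>x\<bar> < \<epsilon>"
  shows "\<bar>f_asym f x\<bar> \<le> 3*C/2 * \<bar>x\<bar> powr (-1-Y)"
  using abs_f_asym_le_f_sym[of x] comparable[OF assms] by linarith

lemma Re_levy_symbol_bounded: "\<exists>K. \<forall>u. \<bar>Re (levy_symbol b f u)\<bar> \<le> K * (1 + u\<^sup>2) powr (Y/2)"
proof -
  define K1 where "K1 = (\<integral>t. \<bar>1 - cos t\<bar> * \<bar>t\<bar> powr (-1-Y) \<partial>lborel)"
  define Ms where "Ms = (\<integral>x. min (x\<^sup>2) \<bar>x\<bar> * f_sym f x \<partial>lborel)"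
  have "0 \<le> K1" "0 \<le> Ms"
    unfolding K1_def Ms_def using f_sym_nonneg by simp_all
  have "\<bar>Re (levy_symbol b f u)\<bar> \<le> (3*C/2 * K1 + 2/\<epsilon>\<^sup>2 * Ms) * (1 + u\<^sup>2) powr (Y/2)" for u
  proof -
    have "\<bar>Re (levy_symbol b f u)\<bar> \<le> 3*C/2 * \<bar>u\<bar> powr Y * K1
        + (\<integral>x. 2/\<epsilon>\<^sup>2 * (min (x\<^sup>2) \<bar>x\<bar> * f_sym f x) \<partial>lborel)"
      unfolding Re_levy_symbol_f_sym K1_def
    proof (rule integral_kernel_bound[where k="\<lambda>t. 1 - cos t"])
      show "integrable lborel (\<lambda>t. \<bar>1 - cos t\<bar> * \<bar>t\<bar> powr (-1-Y))"
        using integrable_abs_one_minus_cos_abs_powr Y_pos Y_less_2 by blast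
      show "\<bar>f_sym f x\<bar> \<le> 3*C/2 * \<bar>x\<bar> powr (-1-Y)" if "x \<noteq> 0" "\<bar>x\<bar> < \<epsilon>" for x
        using comparable[OF that] f_sym_nonneg[of x] by simp
      show "\<bar>(1 - cos (u*x)) * f_sym f x\<bar> \<le> 2/\<epsilon>\<^sup>2 * (min (x\<^sup>2) \<bar>x\<bar> * f_sym f x)"
        if "\<epsilon> \<le> \<bar>x\<bar>" for x
      proof -
        have "\<bar>(1 - cos (u*x)) * f_sym f x\<bar> \<le> 2 * f_sym f x"
          using f_sym_nonneg[of x] cos_le_one[of "u*x"] cos_ge_minus_one[of "u*x"]
          by (simp add: abs_mult mult_right_mono)
        also have "\<dots> \<le> 2/\<epsilon>\<^sup>2 * (min (x\<^sup>2) \<bar>x\<bar> * f_sym f x)"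
          using le_min_sq_abs_mult_div(1)[OF eps_pos eps_le_1 that f_sym_nonneg[of x]] by simp
        finally show ?thesis .
      qed
    qed (use C_pos integrable_moment_f_sym f_sym_nonneg in auto)
    also have "\<dots> = (3*C/2 * K1) * \<bar>u\<bar> powr Y + 2/\<epsilon>\<^sup>2 * Ms"
      by (simp add: Ms_def)
    also have "\<dots> \<le> (3*C/2 * K1) * (1 + u\<^sup>2) powr (Y/2) + 2/\<epsilon>\<^sup>2 * Ms * (1 + u\<^sup>2) powr (Y/2)"
      using abs_powr_le_japanese_bracket[of Y Y u] C_pos \<open>0 \<le> K1\<close> \<open>0 \<le> Ms\<close> Y_pos
      by (intro add_mono mult_left_mono le_mult_japanese_bracket) auto
    finally show ?thesis by (simp add: algebra_simps)
  qed
  then show ?thesis by blast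
qed

lemma one_minus_cos_mult_f_sym_ge:
  assumes "0 < r" "r < \<epsilon>" "\<bar>u\<bar> * r = 1" "r/2 \<le> x" "x \<le> r"
  shows "(1 - cos (1/2)) * (C/2 * r powr (-1-Y)) \<le> (1 - cos (u*x)) * f_sym f x"
proof -
  have "0 < x"
    using assms(1,4) by linarith
  have "\<bar>u\<bar> * (r/2) \<le> \<bar>u\<bar> * x"
    using assms(4) by (rule mult_left_mono) simp
  moreover have "\<bar>u\<bar> * x \<le> \<bar>u\<bar> * r"
    using assms(5) by (rule mult_left_mono) simp
  ultimately have "1/2 \<le> \<bar>u*x\<bar>" "\<bar>u*x\<bar> \<le> 1"
    using \<open>0 < x\<close> assms(3) by (simp_all add: abs_mult)
  then have "cos (u*x) \<le> cos (1/2)"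
    using pi_gt3 cos_monotone_0_pi_le[of "1/2" "\<bar>u*x\<bar>"] by simp
  then have cos_bound: "1 - cos (1/2) \<le> 1 - cos (u*x)"
    by simp
  have "C/2 * r powr (-1-Y) \<le> C/2 * x powr (-1-Y)"
    by (rule mult_left_mono[OF powr_mono2']) (use C_pos Y_pos \<open>0 < x\<close> assms(5) in auto)
  also have "\<dots> \<le> f_sym f x"
    using comparable[of x] \<open>0 < x\<close> assms(2,5) by simp
  finally have "C/2 * r powr (-1-Y) \<le> f_sym f x" .
  with cos_bound show ?thesis
    by (rule mult_mono) (use C_pos in simp_all)
qed

lemma Re_levy_symbol_ge:
  assumes "1/\<epsilon> < \<bar>u\<bar>"
  shows "(1 - cos (1/2)) * C/4 * \<bar>u\<bar> powr Y \<le> Re (levy_symbol b f u)"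
proof -
  define r where "r = 1/\<bar>u\<bar>"
  have "0 < \<bar>u\<bar>"
    using assms eps_pos by (smt (verit) divide_pos_pos)
  then have "0 < r" "r < \<epsilon>" "\<bar>u\<bar> * r = 1"
    using assms eps_pos by (simp_all add: r_def field_simps)
  let ?S = "{r/2..r}"
  let ?v = "(1 - cos (1/2)) * (C/2 * r powr (-1-Y))"
  have bound: "?v * indicator ?S x \<le> (1 - cos (u*x)) * f_sym f x" for x
    using one_minus_cos_mult_f_sym_ge[OF \<open>0 < r\<close> \<open>r < \<epsilon>\<close> \<open>\<bar>u\<bar> * r = 1\<close>, of x]
      f_sym_nonneg[of x] cos_le_one[of "u*x"]
    by (cases "x \<in> ?S") simp_all
  have "(1 - cos (1/2)) * C/4 * \<bar>u\<bar> powr Y = ?v * (r - r/2)"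
  proof -
    have "r powr (-1-Y) * r = r powr (-Y)"
      using powr_add[of r "-1-Y" 1] \<open>0 < r\<close> by simp
    moreover have "r powr (-Y) = \<bar>u\<bar> powr Y"
      unfolding r_def using \<open>0 < \<bar>u\<bar>\<close> by (simp add: powr_divide powr_minus_divide)
    ultimately show ?thesis
      by (simp add: field_simps)
  qed
  also have "\<dots> = (\<integral>x. ?v * indicator ?S x \<partial>lborel)"
    using \<open>0 < r\<close> by (simp add: measure_def)
  also have "\<dots> \<le> Re (levy_symbol b f u)"
    unfolding Re_levy_symbol_f_sym
  proof (rule integral_mono[OF _ integrable_one_minus_cos_f_sym bound])
    show "integrable lborel (\<lambda>x. ?v * indicator ?S x)"
      by (intro integrable_mult_right integrable_real_indicator) (auto simp: emeasure_lborel_Icc_eq)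
  qed
  finally show ?thesis .
qed

lemma Im_levy_symbol_bounded_gt_1:
  assumes "1 < Y"
  shows "\<exists>K. \<forall>u. \<bar>Im (levy_symbol b f u)\<bar> \<le> K * (1 + u\<^sup>2) powr (Y/2)"
proof -
  define K2 where "K2 = (\<integral>t. \<bar>t - sin t\<bar> * \<bar>t\<bar> powr (-1-Y) \<partial>lborel)"
  define Ms where "Ms = (\<integral>x. min (x\<^sup>2) \<bar>x\<bar> * f_sym f x \<partial>lborel)"
  have "0 \<le> K2" "0 \<le> Ms"
    unfolding K2_def Ms_def using f_sym_nonneg by simp_all
  have "\<bar>Im (levy_symbol b f u)\<bar> \<le> (\<bar>b\<bar> + 2/\<epsilon> * Ms + 3*C/2 * K2) * (1 + u\<^sup>2) powr (Y/2)" for u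
  proof -
    define W where "W = (1 + u\<^sup>2) powr (Y/2)"
    have "\<bar>\<integral>x. (u*x - sin (u*x)) * f_asym f x \<partial>lborel\<bar> \<le> 3*C/2 * \<bar>u\<bar> powr Y * K2
        + (\<integral>x. 2*\<bar>u\<bar>/\<epsilon> * (min (x\<^sup>2) \<bar>x\<bar> * f_sym f x) \<partial>lborel)"
      unfolding K2_def
    proof (rule integral_kernel_bound[where k="\<lambda>t. t - sin t"])
      show "integrable lborel (\<lambda>t. \<bar>t - sin t\<bar> * \<bar>t\<bar> powr (-1-Y))"
        using integrable_abs_sub_sin_abs_powr assms Y_less_2 by blast
      show "\<bar>f_asym f x\<bar> \<le> 3*C/2 * \<bar>x\<bar> powr (-1-Y)" if "x \<noteq> 0" "\<bar>x\<bar> < \<epsilon>" for x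
        using abs_f_asym_le_near_0[OF that] .
      show "\<bar>(u*x - sin (u*x)) * f_asym f x\<bar> \<le> 2*\<bar>u\<bar>/\<epsilon> * (min (x\<^sup>2) \<bar>x\<bar> * f_sym f x)"
        if "\<epsilon> \<le> \<bar>x\<bar>" for x
        by (rule abs_sub_sin_mult_f_asym_le[OF eps_pos eps_le_1 that])
    qed (use C_pos integrable_moment_f_sym f_sym_nonneg eps_pos in auto)
    also have "\<dots> = 3*C/2 * \<bar>u\<bar> powr Y * K2 + 2*\<bar>u\<bar>/\<epsilon> * Ms"
      by (simp add: Ms_def)
    finally have kernel_bound: "\<bar>\<integral>x. (u*x - sin (u*x)) * f_asym f x \<partial>lborel\<bar>
        \<le> 3*C/2 * \<bar>u\<bar> powr Y * K2 + 2*\<bar>u\<bar>/\<epsilon> * Ms" .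
    have "\<bar>Im (levy_symbol b f u)\<bar> \<le> \<bar>u*b\<bar> + \<bar>\<integral>x. (u*x - sin (u*x)) * f_asym f x \<partial>lborel\<bar>"
      unfolding Im_levy_symbol_f_asym by (rule abs_triangle_ineq4)
    also have "\<dots> \<le> \<bar>u\<bar> * \<bar>b\<bar> + (3*C/2 * \<bar>u\<bar> powr Y * K2 + 2*\<bar>u\<bar>/\<epsilon> * Ms)"
      using kernel_bound by (simp add: abs_mult)
    also have "\<dots> \<le> W * \<bar>b\<bar> + (3*C/2 * W * K2 + 2*W/\<epsilon> * Ms)"
      using abs_powr_le_japanese_bracket[of 1 Y u] abs_powr_le_japanese_bracket[of Y Y u]
        assms C_pos eps_pos \<open>0 \<le> K2\<close> \<open>0 \<le> Ms\<close>
      by (intro add_mono mult_right_mono mult_left_mono divide_right_mono) (auto simp: W_def)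
    also have "\<dots> = (\<bar>b\<bar> + 2/\<epsilon> * Ms + 3*C/2 * K2) * W"
      using eps_pos by (simp add: field_simps)
    finally show ?thesis
      by (simp add: W_def)
  qed
  then show ?thesis by blast
qed

lemma Im_levy_symbol_bounded_eq_1:
  assumes "Y = 1" "\<alpha> < 2" and f_asym_bigo: "f_asym f \<in> O[at 0](\<lambda>x. \<bar>x\<bar> powr (- \<alpha>))"
  shows "\<exists>K. \<forall>u. \<bar>Im (levy_symbol b f u)\<bar> \<le> K * (1 + u\<^sup>2) powr (Y/2)"
proof -
  obtain Ka d where "0 < Ka" "0 < d"
    and near: "\<And>x. x \<noteq> 0 \<Longrightarrow> \<bar>x\<bar> < d \<Longrightarrow> \<bar>f_asym f x\<bar> \<le> Ka * \<bar>x\<bar> powr (- \<alpha>)"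
    using bigo_at_0_abs_powrE[OF f_asym_bigo] by blast
  define e where "e = min 1 d"
  have "0 < e" "e \<le> 1"
    using \<open>0 < d\<close> by (auto simp: e_def)
  let ?P = "\<lambda>x. indicator {-e..e} x * \<bar>x\<bar> powr (1 - \<alpha>) :: real"
  have "integrable lborel ?P"
    using integrable_indicator_abs_powr_near_0[of "1 - \<alpha>" e] assms(2) \<open>0 < e\<close> by simp
  define P where "P = (\<integral>x. ?P x \<partial>lborel)"
  define Ms where "Ms = (\<integral>x. min (x\<^sup>2) \<bar>x\<bar> * f_sym f x \<partial>lborel)"
  have "0 \<le> P" "0 \<le> Ms"
    unfolding P_def Ms_def using f_sym_nonneg by simp_all
  have "\<bar>Im (levy_symbol b f u)\<bar> \<le> (\<bar>b\<bar> + 2 * Ka * P + 2/e * Ms) * (1 + u\<^sup>2) powr (Y/2)" for u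
  proof -
    have "\<bar>\<integral>x. (u*x - sin (u*x)) * f_asym f x \<partial>lborel\<bar>
        \<le> (\<integral>x. 2*\<bar>u\<bar>*Ka * ?P x \<partial>lborel) + (\<integral>x. 2*\<bar>u\<bar>/e * (min (x\<^sup>2) \<bar>x\<bar> * f_sym f x) \<partial>lborel)"
    proof (rule integral_bound_near_far)
      show "\<bar>(u*x - sin (u*x)) * f_asym f x\<bar> \<le> 2*\<bar>u\<bar>*Ka * ?P x" if "x \<noteq> 0" "\<bar>x\<bar> < e" for x
      proof -
        have "x \<in> {-e..e}" "\<bar>x\<bar> < d"
          using that by (auto simp: e_def abs_less_iff)
        then show ?thesis
          using abs_sub_sin_mult_le_abs_powr[OF near[OF that(1)], of u] by simp
      qed
      show "\<bar>(u*x - sin (u*x)) * f_asym f x\<bar> \<le> 2*\<bar>u\<bar>/e * (min (x\<^sup>2) \<bar>x\<bar> * f_sym f x)"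
        if "e \<le> \<bar>x\<bar>" for x
        by (rule abs_sub_sin_mult_f_asym_le[OF \<open>0 < e\<close> \<open>e \<le> 1\<close> that])
    qed (use \<open>integrable lborel ?P\<close> \<open>0 < Ka\<close> \<open>0 < e\<close> integrable_moment_f_sym f_sym_nonneg in auto)
    also have "\<dots> = 2*\<bar>u\<bar>*Ka * P + 2*\<bar>u\<bar>/e * Ms"
      by (simp add: P_def Ms_def)
    finally have kernel_bound: "\<bar>\<integral>x. (u*x - sin (u*x)) * f_asym f x \<partial>lborel\<bar>
        \<le> 2*\<bar>u\<bar>*Ka * P + 2*\<bar>u\<bar>/e * Ms" .
    have "\<bar>Im (levy_symbol b f u)\<bar> \<le> \<bar>u*b\<bar> + \<bar>\<integral>x. (u*x - sin (u*x)) * f_asym f x \<partial>lborel\<bar>"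
      unfolding Im_levy_symbol_f_asym by (rule abs_triangle_ineq4)
    also have "\<dots> \<le> (\<bar>b\<bar> + 2 * Ka * P + 2/e * Ms) * \<bar>u\<bar>"
      using kernel_bound \<open>0 < e\<close> by (simp add: abs_mult field_simps)
    also have "\<dots> \<le> (\<bar>b\<bar> + 2 * Ka * P + 2/e * Ms) * (1 + u\<^sup>2) powr (Y/2)"
      using abs_powr_le_japanese_bracket[of 1 Y u] assms(1) \<open>0 < Ka\<close> \<open>0 < e\<close> \<open>0 \<le> P\<close> \<open>0 \<le> Ms\<close>
      by (intro mult_left_mono) auto
    finally show ?thesis .
  qed
  then show ?thesis by blast
qed

lemma integrable_first_moment:
  assumes "Y < 1"
  shows "integrable lborel (\<lambda>x. x * f x)"
proof (rule integral_bound_near_far(1))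
  let ?N = "\<lambda>x. 3*C * (indicator {-\<epsilon>..\<epsilon>} x * \<bar>x\<bar> powr (-Y))"
  show "integrable lborel ?N"
    using integrable_indicator_abs_powr_near_0[of "-Y" \<epsilon>] assms eps_pos by simp
  show "\<bar>x * f x\<bar> \<le> ?N x" if "x \<noteq> 0" "\<bar>x\<bar> < \<epsilon>" for x
  proof -
    have "\<bar>x * f x\<bar> \<le> \<bar>x\<bar> * (3*C * \<bar>x\<bar> powr (-1-Y))"
      unfolding abs_mult using f_le_twice_f_sym[of x] comparable[OF that] nonneg[of x]
      by (intro mult_left_mono) auto
    also have "\<dots> = ?N x"
      using that by (simp add: abs_times_abs_powr indicator_def abs_le_iff abs_less_iff)
    finally show ?thesis .
  qed
  show "\<bar>x * f x\<bar> \<le> min (x\<^sup>2) \<bar>x\<bar> * f x / \<epsilon>" if "\<epsilon> \<le> \<bar>x\<bar>" for x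
    using le_min_sq_abs_mult_div(2)[OF eps_pos eps_le_1 that nonneg[of x]] nonneg[of x] by (simp add: abs_mult)
qed (use integrable_moment C_pos eps_pos nonneg in auto)

lemma Im_levy_symbol_compensated:
  assumes "Y < 1" and drift: "b = (\<integral>x. x * f x \<partial>lborel)"
  shows "Im (levy_symbol b f u) = (\<integral>x. sin (u*x) * f_asym f x \<partial>lborel)"
proof -
  have "(\<lambda>x. sin (u*x) * f x) = (\<lambda>x. u * (x * f x) - (u*x - sin (u*x)) * f x)"
    by (auto simp: algebra_simps)
  then have sin_integrable: "integrable lborel (\<lambda>x. sin (u*x) * f x)"
    and "(\<integral>x. sin (u*x) * f x \<partial>lborel) = Im (levy_symbol b f u)"
    using integrable_first_moment[OF assms(1)] integrable_sub_sin_density[of u]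
    by (simp_all add: levy_symbol_Re_Im drift Bochner_Integration.integral_diff)
  then show ?thesis
    using integral_odd_mult_f_asym(2)[OF sin_integrable] by simp
qed

lemma Im_levy_symbol_bounded_lt_1:
  assumes "Y < 1" "\<alpha> \<le> 1 + Y" and f_asym_bigo: "f_asym f \<in> O[at 0](\<lambda>x. \<bar>x\<bar> powr (- \<alpha>))"
    and drift: "b = (\<integral>x. x * f x \<partial>lborel)"
  shows "\<exists>K. \<forall>u. \<bar>Im (levy_symbol b f u)\<bar> \<le> K * (1 + u\<^sup>2) powr (Y/2)"
proof -
  obtain Ka d where "0 < Ka" "0 < d"
    and near: "\<And>x. x \<noteq> 0 \<Longrightarrow> \<bar>x\<bar> < d \<Longrightarrow> \<bar>f_asym f x\<bar> \<le> Ka * \<bar>x\<bar> powr (- \<alpha>)"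
    using bigo_at_0_abs_powrE[OF f_asym_bigo] by blast
  define e where "e = min 1 d"
  have "0 < e" "e \<le> 1"
    using \<open>0 < d\<close> by (auto simp: e_def)
  define K3 where "K3 = (\<integral>t. \<bar>sin t\<bar> * \<bar>t\<bar> powr (-1-Y) \<partial>lborel)"
  define Ms where "Ms = (\<integral>x. min (x\<^sup>2) \<bar>x\<bar> * f_sym f x \<partial>lborel)"
  have "0 \<le> K3" "0 \<le> Ms"
    unfolding K3_def Ms_def using f_sym_nonneg by simp_all
  have "\<bar>Im (levy_symbol b f u)\<bar> \<le> (Ka * K3 + 1/e\<^sup>2 * Ms) * (1 + u\<^sup>2) powr (Y/2)" for u
  proof -
    have "\<bar>Im (levy_symbol b f u)\<bar> \<le> Ka * \<bar>u\<bar> powr Y * K3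
        + (\<integral>x. 1/e\<^sup>2 * (min (x\<^sup>2) \<bar>x\<bar> * f_sym f x) \<partial>lborel)"
      unfolding Im_levy_symbol_compensated[OF assms(1) drift] K3_def
    proof (rule integral_kernel_bound[where k=sin])
      show "integrable lborel (\<lambda>t. \<bar>sin t\<bar> * \<bar>t\<bar> powr (-1-Y))"
        using integrable_abs_sin_abs_powr assms(1) Y_pos by blast
      show "\<bar>f_asym f x\<bar> \<le> Ka * \<bar>x\<bar> powr (-1-Y)" if "x \<noteq> 0" "\<bar>x\<bar> < e" for x
      proof -
        have "\<bar>x\<bar> powr (- \<alpha>) \<le> \<bar>x\<bar> powr (-1-Y)"
          by (rule powr_mono') (use assms(2) that e_def in auto)
        then show ?thesis
          using near[of x] that \<open>0 < Ka\<close> e_def by (smt (verit) mult_left_mono min_less_iff_conj)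
      qed
      show "\<bar>sin (u*x) * f_asym f x\<bar> \<le> 1/e\<^sup>2 * (min (x\<^sup>2) \<bar>x\<bar> * f_sym f x)"
        if "e \<le> \<bar>x\<bar>" for x
      proof -
        have "\<bar>sin (u*x) * f_asym f x\<bar> = \<bar>sin (u*x)\<bar> * \<bar>f_asym f x\<bar>"
          by (rule abs_mult)
        also have "\<dots> \<le> 1 * f_sym f x"
          by (rule mult_mono[OF abs_sin_le_one abs_f_asym_le_f_sym]) simp_all
        also have "\<dots> \<le> 1/e\<^sup>2 * (min (x\<^sup>2) \<bar>x\<bar> * f_sym f x)"
          using le_min_sq_abs_mult_div(1)[OF \<open>0 < e\<close> \<open>e \<le> 1\<close> that f_sym_nonneg[of x]] by simp
        finally show ?thesis .
      qed
    qed (use \<open>0 < Ka\<close> integrable_moment_f_sym f_sym_nonneg in auto)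
    also have "\<dots> = Ka * K3 * \<bar>u\<bar> powr Y + 1/e\<^sup>2 * Ms"
      by (simp add: Ms_def)
    also have "\<dots> \<le> Ka * K3 * (1 + u\<^sup>2) powr (Y/2) + 1/e\<^sup>2 * Ms * (1 + u\<^sup>2) powr (Y/2)"
      using abs_powr_le_japanese_bracket[of Y Y u] Y_pos \<open>0 < Ka\<close> \<open>0 \<le> K3\<close> \<open>0 \<le> Ms\<close>
      by (intro add_mono mult_left_mono le_mult_japanese_bracket) auto
    finally show ?thesis
      by (simp add: algebra_simps)
  qed
  then show ?thesis by blast
qed

theorem has_sobolev_index_levy_symbol:
  assumes "\<exists>K. \<forall>u. \<bar>Im (levy_symbol b f u)\<bar> \<le> K * (1 + u\<^sup>2) powr (Y/2)"
  shows "has_sobolev_index (levy_symbol b f) Y"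
proof -
  obtain KR where KR: "\<And>u. \<bar>Re (levy_symbol b f u)\<bar> \<le> KR * (1 + u\<^sup>2) powr (Y/2)"
    using Re_levy_symbol_bounded by blast
  obtain KI where KI: "\<And>u. \<bar>Im (levy_symbol b f u)\<bar> \<le> KI * (1 + u\<^sup>2) powr (Y/2)"
    using assms by blast
  have "0 < 1 - cos (1/2::real)"
    using cos_monotone_0_pi[of 0 "1/2"] pi_gt3 by simp
  show ?thesis
  proof (rule has_sobolev_indexI[where K="KR + KI" and c="(1 - cos (1/2)) * C/4" and R="1/\<epsilon>"])
    show "cmod (levy_symbol b f u) \<le> (KR + KI) * (1 + u\<^sup>2) powr (Y/2)" for u
      using cmod_le[of "levy_symbol b f u"] KR[of u] KI[of u] by (simp add: distrib_right)
  qed (use Y_pos Y_less_2 C_pos \<open>0 < 1 - cos (1/2)\<close> Re_levy_symbol_nonneg Re_levy_symbol_ge in auto)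
qed

end

theorem mainTheorem7:
  fixes f :: "real \<Rightarrow> real" and b Y C \<delta> :: real
  assumes f_nonneg: "\<And>x. f x \<ge> 0"
    and f_meas: "f \<in> borel_measurable borel"
    and special_levy: "integrable lborel (\<lambda>x. min (x\<^sup>2) \<bar>x\<bar> * f x)"
    and C_pos: "C > 0" and delta_pos: "\<delta> > 0"
    and g_bound: "(\<lambda>x. f_sym f x - C / \<bar>x\<bar> powr (1 + Y))
                    \<in> O[at 0](\<lambda>x. \<bar>x\<bar> powr (- (1 + Y - \<delta>)))"
    and cases:
      "(0 < Y \<and> Y < 1 \<and>
          (\<exists>\<alpha>. \<alpha> \<le> 1 + Y \<and> f_asym f \<in> O[at 0](\<lambda>x. \<bar>x\<bar> powr (- \<alpha>))) \<and>
          integrable lborel (\<lambda>x. x * f_asym f x) \<and>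
          b = (\<integral>x. x * f x \<partial>lborel))
     \<or> (Y = 1 \<and> (\<exists>\<alpha>. \<alpha> < 2 \<and> f_asym f \<in> O[at 0](\<lambda>x. \<bar>x\<bar> powr (- \<alpha>))))
     \<or> (1 < Y \<and> Y < 2)"
  shows "has_sobolev_index (levy_symbol b f) Y"
proof -
  have "0 < Y" "Y < 2"
    using cases by auto
  obtain \<epsilon> where "0 < \<epsilon>" "\<epsilon> \<le> 1" and comparable: "\<And>x. x \<noteq> 0 \<Longrightarrow> \<bar>x\<bar> < \<epsilon> \<Longrightarrow>
      C/2 * \<bar>x\<bar> powr (-1-Y) \<le> f_sym f x \<and> f_sym f x \<le> 3*C/2 * \<bar>x\<bar> powr (-1-Y)"
    using comparable_near_0[OF g_bound C_pos delta_pos] by blast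
  interpret stable_like_levy_density f C Y \<epsilon>
    by unfold_locales (use f_nonneg f_meas special_levy C_pos \<open>0 < Y\<close> \<open>Y < 2\<close>
        \<open>0 < \<epsilon>\<close> \<open>\<epsilon> \<le> 1\<close> comparable in auto)
  have "\<exists>K. \<forall>u. \<bar>Im (levy_symbol b f u)\<bar> \<le> K * (1 + u\<^sup>2) powr (Y/2)"
    using cases Im_levy_symbol_bounded_lt_1 Im_levy_symbol_bounded_eq_1 Im_levy_symbol_bounded_gt_1
    by blast
  then show ?thesis
    by (rule has_sobolev_index_levy_symbol)
qed

end
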